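(* Let $\rho,\sigma$ be $n$-qubit pure states and let $\epsilon>0$, $\delta>0$. Let $\tilde p_{\mathrm{mix}}$ be a distribution with $\|p_{\mathrm{mix}}-\tilde p_{\mathrm{mix}}\|_{\mathrm{TV}}<\Delta$, and let $M_1=\max(M_1(\rho),M_1(\sigma))$. Let $f=\frac12(1+\mathrm{tr}(\rho\sigma))$ and let $f(N_1,N_2)$ be the symmetric-protocol estimator. Then $|f(N_1,N_2)-f|\le 5\epsilon+2\Delta$ with probability at least $1-\delta$, provided that $$N_1\ge\frac{1}{2\epsilon^2}\log(8/\delta),\qquad N_2\ge\frac{2}{\min(\epsilon^4,\epsilon^2 2^{-2M_1/\epsilon})}\log(8N_1/\delta).$$
   Context: $\log$ is base 2. Pauli strings $P_x$, $x\in\{0,1\}^{2n}$, are the $n$-qubit Hermitian Pauli strings; $\alpha_\rho(x)=\mathrm{tr}(\rho P_x)$; $p_\rho(x)=\alpha_\rho(x)^2/2^n$ for pure $\rho$; $p_{\mathrm{mix}}=\frac12(p_\rho+p_\sigma)$. $M_1(\rho)=H_1(p_\rho)-n$ where $H_1$ is the Shannon entropy (base 2). Symmetric protocol: draw $x_1,\dots,x_{N_1}$ i.i.d. from $\tilde p_{\mathrm{mix}}$; for each $i$, measure $P_{x_i}$ $N_2$ times on copies of $\rho$ and $N_2$ times on copies of $\sigma$, obtaining empirical means $\hat\alpha_\rho(x_i),\hat\alpha_\sigma(x_i)$ of the $\pm1$ outcomes; output $f(N_1,N_2)=\frac{1}{N_1}\sum_iG(\hat\alpha_\rho(x_i),\hat\alpha_\sigma(x_i))$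 with $G(u,v)=\frac12\frac{(u+v)^2}{u^2+v^2}$ (and $G(0,0)$ an arbitrary fixed value in $[0,1]$). *)

theory Defs
  imports "Jordan_Normal_Form.Matrix" "HOL-Probability.Probability"
begin

definition mtrace :: "complex mat \<Rightarrow> complex" where
  "mtrace A = (\<Sum>i<dim_row A. A $$ (i, i))"

definition pure_state :: "nat \<Rightarrow> complex mat \<Rightarrow> bool" where
  "pure_state n \<rho> \<longleftrightarrow> (\<exists>\<psi> :: nat \<Rightarrow> complex.
      (\<Sum>i<2 ^ n. (cmod (\<psi> i))\<^sup>2) = 1 \<and>
      \<rho> = Matrix.mat (2 ^ n) (2 ^ n) (\<lambda>(i, j). \<psi> i * cnj (\<psi> j)))"

definition pauli_strings :: "nat \<Rightarrow> bool list set" where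
  "pauli_strings n = {x. length x = 2 * n}"

text \<open>Single-qubit Hermitian Pauli i^(ab) X^a Z^b, entry (r,c):
  (0,0) = I, (1,0) = X, (0,1) = Z, (1,1) = Y.\<close>
definition pauli1 :: "bool \<Rightarrow> bool \<Rightarrow> bool \<Rightarrow> bool \<Rightarrow> complex" where
  "pauli1 a b r c =
     (if \<not> a \<and> \<not> b then (if r = c then 1 else 0)
      else if a \<and> \<not> b then (if r \<noteq> c then 1 else 0)
      else if \<not> a \<and> b then (if r = c then (if r then -1 else 1) else 0)
      else (if r = c then 0 else if r then \<i> else - \<i>))"

text \<open>n-qubit Pauli string P_x for x = (a_1..a_n, b_1..b_n), the tensor product of
  single-qubit Paulis; qubit k corresponds to bit k of the basis index.\<close>
definition pauli :: "nat \<Rightarrow> bool list \<Rightarrow> complex mat" where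
  "pauli n x = Matrix.mat (2 ^ n) (2 ^ n)
     (\<lambda>(r, c). \<Prod>k<n. pauli1 (x ! k) (x ! (n + k)) (odd (r div 2 ^ k)) (odd (c div 2 ^ k)))"

definition alpha :: "nat \<Rightarrow> complex mat \<Rightarrow> bool list \<Rightarrow> real" where
  "alpha n \<rho> x = Re (mtrace (\<rho> * pauli n x))"

definition p_state :: "nat \<Rightarrow> complex mat \<Rightarrow> bool list \<Rightarrow> real" where
  "p_state n \<rho> x = (alpha n \<rho> x)\<^sup>2 / 2 ^ n"

definition p_mix :: "nat \<Rightarrow> complex mat \<Rightarrow> complex mat \<Rightarrow> bool list \<Rightarrow> real" where
  "p_mix n \<rho> \<sigma> x = (p_state n \<rho> x + p_state n \<sigma> x) / 2"

definition shannon :: "'a set \<Rightarrow> ('a \<Rightarrow> real) \<Rightarrow> real" where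
  "shannon X p = - (\<Sum>x\<in>X. if p x = 0 then 0 else p x * log 2 (p x))"

definition stabilizer_renyi1 :: "nat \<Rightarrow> complex mat \<Rightarrow> real" where
  "stabilizer_renyi1 n \<rho> = shannon (pauli_strings n) (p_state n \<rho>) - real n"

definition tv_dist :: "'a set \<Rightarrow> ('a \<Rightarrow> real) \<Rightarrow> ('a \<Rightarrow> real) \<Rightarrow> real" where
  "tv_dist X p q = (\<Sum>x\<in>X. \<bar>p x - q x\<bar>) / 2"

definition G :: "real \<Rightarrow> real \<Rightarrow> real \<Rightarrow> real" where
  "G g0 u v = (if u = 0 \<and> v = 0 then g0 else (u + v)\<^sup>2 / (2 * (u\<^sup>2 + v\<^sup>2)))"

fun seq_pmf :: "'a pmf list \<Rightarrow> 'a list pmf" where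
  "seq_pmf [] = return_pmf []"
| "seq_pmf (p # ps) = bind_pmf p (\<lambda>x. bind_pmf (seq_pmf ps) (\<lambda>xs. return_pmf (x # xs)))"

definition iid_pmf :: "nat \<Rightarrow> 'a pmf \<Rightarrow> 'a list pmf" where
  "iid_pmf N p = seq_pmf (replicate N p)"

definition measure_pauli :: "nat \<Rightarrow> complex mat \<Rightarrow> bool list \<Rightarrow> real pmf" where
  "measure_pauli n \<rho> x =
     map_pmf (\<lambda>b. if b then 1 else -1) (bernoulli_pmf ((1 + alpha n \<rho> x) / 2))"

definition emp_mean :: "real list \<Rightarrow> real" where
  "emp_mean xs = sum_list xs / real (length xs)"

definition protocol_round ::
  "nat \<Rightarrow> complex mat \<Rightarrow> complex mat \<Rightarrow> real \<Rightarrow> nat \<Rightarrow> bool list \<Rightarrow> real pmf" where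
  "protocol_round n \<rho> \<sigma> g0 N2 x =
     bind_pmf (iid_pmf N2 (measure_pauli n \<rho> x)) (\<lambda>as.
     bind_pmf (iid_pmf N2 (measure_pauli n \<sigma> x)) (\<lambda>bs.
     return_pmf (G g0 (emp_mean as) (emp_mean bs))))"

definition symmetric_estimator ::
  "nat \<Rightarrow> complex mat \<Rightarrow> complex mat \<Rightarrow> real \<Rightarrow> bool list pmf \<Rightarrow> nat \<Rightarrow> nat \<Rightarrow> real pmf" where
  "symmetric_estimator n \<rho> \<sigma> g0 pt N1 N2 =
     bind_pmf (iid_pmf N1 pt) (\<lambda>xs.
     bind_pmf (seq_pmf (map (protocol_round n \<rho> \<sigma> g0 N2) xs)) (\<lambda>gs.
     return_pmf (sum_list gs / real N1)))"

end

(*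
  By the completeness relation of the Pauli strings, sum_x alpha_rho(x) alpha_sigma(x) = 2^n tr(rho sigma),
  so the fidelity (1 + tr(rho sigma))/2 is the p_mix-average of G(alpha_rho(x), alpha_sigma(x)).
  Writing G(u,v) = 1/2 + Im(sgn(u + iv)^2)/2 shows that G is Lipschitz in (u,v) relative to |(u,v)|;
  hence the inner estimates are accurate wherever alpha_rho(x)^2 or alpha_sigma(x)^2 is at least
  T = 2^(-M_1/eps). Since M_1(rho) = sum_x p_rho(x) (-log alpha_rho(x)^2), Markov's inequality shows
  that the strings where both are below T carry p_mix-mass at most eps. Hoeffding's inequality for the
  N_2 inner and the N_1 outer samples and the total variation distance between p_mix and the sampling
  distribution account for the remaining error.
*)
theory Submission
  imports Defs
begin

lemma seq_pmf_append:
  "seq_pmf (xs @ ys) = map_pmf (\<lambda>(a, b). a @ b) (pair_pmf (seq_pmf xs) (seq_pmf ys))"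
proof (induction xs)
  case Nil
  then show ?case by (simp add: pair_return_pmf1 pmf.map_comp o_def)
next
  case (Cons p xs)
  then show ?case by (simp add: map_pmf_def pair_pmf_def bind_assoc_pmf bind_return_pmf)
qed

lemma seq_pmf_eq_Pi_pmf:
  "seq_pmf ps = map_pmf (\<lambda>f. map f [0..<length ps]) (Pi_pmf {..<length ps} dflt (\<lambda>i. ps ! i))"
proof (induction ps rule: rev_induct)
  case Nil
  then show ?case by simp
next
  case (snoc p ps)
  define N where "N = length ps"
  have "Pi_pmf {..<length (ps @ [p])} dflt (\<lambda>i. (ps @ [p]) ! i)
      = Pi_pmf (insert N {..<N}) dflt (\<lambda>i. (ps @ [p]) ! i)"
    by (simp add: N_def lessThan_Suc)
  also have "\<dots> = map_pmf (\<lambda>(y, f). f(N := y)) (pair_pmf p (Pi_pmf {..<N} dflt (\<lambda>i. (ps @ [p]) ! i)))"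
    by (subst Pi_pmf_insert) (auto simp: N_def)
  also have "Pi_pmf {..<N} dflt (\<lambda>i. (ps @ [p]) ! i) = Pi_pmf {..<N} dflt (\<lambda>i. ps ! i)"
    by (intro Pi_pmf_cong) (auto simp: N_def nth_append)
  finally have Pi_snoc: "Pi_pmf {..<length (ps @ [p])} dflt (\<lambda>i. (ps @ [p]) ! i) =
     map_pmf (\<lambda>(y, f). f(N := y)) (pair_pmf p (Pi_pmf {..<N} dflt (\<lambda>i. ps ! i)))" .
  have map_upd: "map (f(N := y)) [0..<Suc N] = map f [0..<N] @ [y]" for f and y :: 'a
    by simp
  show ?case
    apply (subst Pi_snoc)
    apply (simp add: seq_pmf_append snoc N_def[symmetric] pmf.map_comp o_def)
    apply (subst pair_commute_pmf)
    apply (simp add: pmf.map_comp o_def case_prod_beta map_upd map_pmf_def pair_pmf_def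
        bind_assoc_pmf bind_return_pmf)
    done
qed

lemma iid_pmf_eq_Pi_pmf: "iid_pmf N p = map_pmf (\<lambda>f. map f [0..<N]) (Pi_pmf {..<N} dflt (\<lambda>_. p))"
  unfolding iid_pmf_def
  by (subst seq_pmf_eq_Pi_pmf[where dflt = dflt])
     (simp, intro arg_cong[where f = "map_pmf _"] Pi_pmf_cong, auto)

lemma set_pmf_seq_pmfD:
  "xs \<in> set_pmf (seq_pmf ps) \<Longrightarrow> length xs = length ps \<and> (\<forall>i<length ps. xs ! i \<in> set_pmf (ps ! i))"
proof (induction ps arbitrary: xs)
  case Nil
  then show ?case by simp
next
  case (Cons p ps)
  then obtain y ys where "xs = y # ys" "y \<in> set_pmf p" "ys \<in> set_pmf (seq_pmf ps)" by auto
  with Cons.IH[of ys] show ?case by (auto simp: nth_Cons split: nat.splits)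
qed

lemma set_pmf_iid_pmfD: "xs \<in> set_pmf (iid_pmf N p) \<Longrightarrow> length xs = N \<and> set xs \<subseteq> set_pmf p"
  unfolding iid_pmf_def using set_pmf_seq_pmfD[of xs "replicate N p"] by (auto simp: in_set_conv_nth)

lemma finite_set_pmf_seq_pmf: "(\<And>p. p \<in> set ps \<Longrightarrow> finite (set_pmf p)) \<Longrightarrow> finite (set_pmf (seq_pmf ps))"
  by (induction ps) auto

lemma finite_set_pmf_iid_pmf: "finite (set_pmf p) \<Longrightarrow> finite (set_pmf (iid_pmf N p))"
  unfolding iid_pmf_def by (rule finite_set_pmf_seq_pmf) simp

lemma bind_iid_pmf_seq_pmf:
  "bind_pmf (iid_pmf N p) (\<lambda>xs. seq_pmf (map f xs)) = iid_pmf N (bind_pmf p f)"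
proof (induction N)
  case 0
  then show ?case by (simp add: iid_pmf_def bind_return_pmf)
next
  case (Suc N)
  have "bind_pmf (iid_pmf (Suc N) p) (\<lambda>xs. seq_pmf (map f xs)) =
        bind_pmf p (\<lambda>x. bind_pmf (iid_pmf N p) (\<lambda>xs. bind_pmf (f x) (\<lambda>y.
           bind_pmf (seq_pmf (map f xs)) (\<lambda>ys. return_pmf (y # ys)))))"
    by (simp add: iid_pmf_def bind_assoc_pmf bind_return_pmf)
  also have "\<dots> = bind_pmf p (\<lambda>x. bind_pmf (f x) (\<lambda>y.
           bind_pmf (bind_pmf (iid_pmf N p) (\<lambda>xs. seq_pmf (map f xs))) (\<lambda>ys. return_pmf (y # ys))))"
    by (subst bind_commute_pmf) (simp add: bind_assoc_pmf)
  also have "\<dots> = bind_pmf p (\<lambda>x. bind_pmf (f x) (\<lambda>y.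
           bind_pmf (iid_pmf N (bind_pmf p f)) (\<lambda>ys. return_pmf (y # ys))))"
    by (simp only: Suc)
  also have "\<dots> = iid_pmf (Suc N) (bind_pmf p f)"
    by (simp add: iid_pmf_def bind_assoc_pmf)
  finally show ?case .
qed

lemma Hoeffding_ineq_iid_Pi_pmf:
  fixes p :: "real pmf" and N :: nat
  assumes p: "set_pmf p \<subseteq> {a..b}" and "a < b" and N: "N > 0"
  defines "M \<equiv> Pi_pmf {..<N} 0 (\<lambda>_. p)"
  shows "Hoeffding_ineq_iid M {..<N} (\<lambda>i f. f i) (\<lambda>f. f 0) a b"
    and "measure_pmf.expectation M (\<lambda>f. f 0) = measure_pmf.expectation p (\<lambda>x. x)"
proof -
  have component: "map_pmf (\<lambda>f. f i) M = p" if "i < N" for i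
    using that unfolding M_def by (subst Pi_pmf_component) auto
  have "measure_pmf.expectation M (\<lambda>f. f 0) = measure_pmf.expectation (map_pmf (\<lambda>f. f 0) M) (\<lambda>x. x)"
    by simp
  then show "measure_pmf.expectation M (\<lambda>f. f 0) = measure_pmf.expectation p (\<lambda>x. x)"
    using component[OF N] by simp
  show "Hoeffding_ineq_iid M {..<N} (\<lambda>i f. f i) (\<lambda>f. f 0) a b"
  proof unfold_locales
    show "prob_space.indep_vars (measure_pmf M) (\<lambda>_. borel) (\<lambda>i f. f i) {..<N}"
      unfolding M_def
      by (intro prob_space.indep_vars_compose2[where Y = "\<lambda>_ x. x", OF _ indep_vars_Pi_pmf])
         (auto simp: measure_pmf.prob_space_axioms)
    show "distr (measure_pmf M) borel (\<lambda>f. f i) = distr (measure_pmf M) borel (\<lambda>f. f 0)"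
      if "i \<in> {..<N}" for i
    proof -
      have "distr (measure_pmf M) borel (\<lambda>f. f i) = distr (measure_pmf (map_pmf (\<lambda>f. f i) M)) borel (\<lambda>x. x)"
        unfolding map_pmf_rep_eq by (subst distr_distr) (auto simp: o_def)
      also have "\<dots> = distr (measure_pmf (map_pmf (\<lambda>f. f 0) M)) borel (\<lambda>x. x)"
        using component[of i] component[OF N] that by simp
      also have "\<dots> = distr (measure_pmf M) borel (\<lambda>f. f 0)"
        unfolding map_pmf_rep_eq by (subst distr_distr) (auto simp: o_def)
      finally show ?thesis .
    qed
    have "f 0 \<in> {a..b}" if "f \<in> set_pmf M" for f
      using that component[OF N] p by force
    then show "AE f in measure_pmf M. f 0 \<in> {a..b}"
      by (simp add: AE_measure_pmf_iff)
  qed (use \<open>a < b\<close> in simp_all)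
qed

lemma prob_iid_pmf_mean_deviation:
  fixes p :: "real pmf"
  assumes "set_pmf p \<subseteq> {a..b}" "a < b" "N > 0" "t \<ge> 0"
  shows "measure_pmf.prob (iid_pmf N p)
           {xs. \<bar>sum_list xs / real N - measure_pmf.expectation p (\<lambda>x. x)\<bar> \<ge> t}
         \<le> 2 * exp (- 2 * real N * t\<^sup>2 / (b - a)\<^sup>2)"
proof -
  define M where "M = Pi_pmf {..<N} 0 (\<lambda>_. p)"
  note Hoeffding = Hoeffding_ineq_iid_Pi_pmf[OF assms(1-3), folded M_def]
  interpret Hoeffding_ineq_iid M "{..<N}" "\<lambda>i f. f i" "\<lambda>f. f 0" a b "measure_pmf.expectation M (\<lambda>f. f 0)"
    using Hoeffding(1) by (simp add: Hoeffding_ineq_iid_def)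
  have "measure_pmf.prob (iid_pmf N p)
           {xs. \<bar>sum_list xs / real N - measure_pmf.expectation p (\<lambda>x. x)\<bar> \<ge> t}
       = measure_pmf.prob M {f. \<bar>(\<Sum>i\<in>{..<N}. f i) / real (card {..<N}) - measure_pmf.expectation p (\<lambda>x. x)\<bar> \<ge> t}"
    unfolding iid_pmf_eq_Pi_pmf[where dflt = 0] M_def[symmetric]
    by (simp add: sum_list_sum_nth atLeast0LessThan)
  also have "\<dots> \<le> 2 * exp (- 2 * real (card {..<N}) * t\<^sup>2 / (b - a)\<^sup>2)"
    using Hoeffding_ineq_abs_ge'[OF assms(4,2)] assms(3) by (simp add: lessThan_empty_iff Hoeffding(2))
  finally show ?thesis by simp
qed

lemma prob_iid_pmf_emp_mean_deviation:
  fixes p :: "real pmf"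
  assumes "set_pmf p \<subseteq> {a..b}" "a < b" "N > 0" "t \<ge> 0"
  shows "measure_pmf.prob (iid_pmf N p) {xs. \<bar>emp_mean xs - measure_pmf.expectation p (\<lambda>x. x)\<bar> \<ge> t}
         \<le> 2 * exp (- 2 * real N * t\<^sup>2 / (b - a)\<^sup>2)"
proof -
  have "measure_pmf.prob (iid_pmf N p) {xs. \<bar>emp_mean xs - measure_pmf.expectation p (\<lambda>x. x)\<bar> \<ge> t}
      = measure_pmf.prob (iid_pmf N p)
          {xs. \<bar>sum_list xs / real N - measure_pmf.expectation p (\<lambda>x. x)\<bar> \<ge> t}"
    by (intro measure_prob_cong_0)
       (auto simp: pmf_eq_0_set_pmf emp_mean_def dest: set_pmf_iid_pmfD)
  with prob_iid_pmf_mean_deviation[OF assms] show ?thesis by simp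
qed

lemma prob_iid_pmf_mean_close:
  fixes p :: "real pmf"
  assumes p: "set_pmf p \<subseteq> {0..1}" and N: "N > 0" and t: "t \<ge> 0"
    and bias: "\<bar>measure_pmf.expectation p (\<lambda>x. x) - c\<bar> \<le> b"
  shows "measure_pmf.prob (map_pmf (\<lambda>xs. sum_list xs / real N) (iid_pmf N p)) {y. \<bar>y - c\<bar> \<le> b + t}
         \<ge> 1 - 2 * exp (- 2 * real N * t\<^sup>2)"
proof -
  let ?dev = "{xs. \<bar>sum_list xs / real N - measure_pmf.expectation p (\<lambda>x. x)\<bar> \<ge> t}"
  have "1 - measure_pmf.prob (iid_pmf N p) ?dev = measure_pmf.prob (iid_pmf N p) (UNIV - ?dev)"
    using measure_pmf.prob_compl[of ?dev "iid_pmf N p"] by simp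
  also have "\<dots> \<le> measure_pmf.prob (iid_pmf N p) {xs. \<bar>sum_list xs / real N - c\<bar> \<le> b + t}"
    using bias by (intro measure_pmf.finite_measure_mono) auto
  finally show ?thesis
    using prob_iid_pmf_mean_deviation[OF p _ N t] by simp
qed

lemma expectation_id_mem_01:
  fixes p :: "real pmf"
  assumes "set_pmf p \<subseteq> {0..1}"
  shows "measure_pmf.expectation p (\<lambda>x. x) \<in> {0..1}"
proof -
  have int: "integrable (measure_pmf p) (\<lambda>x. x)"
    using assms by (intro measure_pmf.integrable_const_bound[where B = 1]) (auto simp: AE_measure_pmf_iff)
  have "0 \<le> measure_pmf.expectation p (\<lambda>x. x)"
    using assms by (intro integral_nonneg_AE) (auto simp: AE_measure_pmf_iff)
  moreover have "measure_pmf.expectation p (\<lambda>x. x) \<le> measure_pmf.expectation p (\<lambda>x. 1)"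
    using assms by (intro integral_mono_AE int) (auto simp: AE_measure_pmf_iff)
  ultimately show ?thesis by simp
qed

lemma norm_sgn_diff_le:
  fixes a b :: "'a::real_normed_vector"
  assumes "b \<noteq> 0"
  shows "norm (sgn a - sgn b) \<le> 2 * norm (a - b) / norm b"
proof (cases "a = 0")
  case True
  then show ?thesis using assms by (simp add: norm_sgn)
next
  case False
  have nb: "norm b > 0" using assms by simp
  have na: "norm a > 0" using False by simp
  have "sgn a - sgn b = (a - b) /\<^sub>R norm b + (inverse (norm a) - inverse (norm b)) *\<^sub>R a"
    using nb na by (simp add: sgn_div_norm algebra_simps divide_inverse_commute scaleR_diff_left)
  then have "norm (sgn a - sgn b)
      \<le> norm ((a - b) /\<^sub>R norm b) + norm ((inverse (norm a) - inverse (norm b)) *\<^sub>R a)"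
    by (metis norm_triangle_ineq)
  also have "norm ((a - b) /\<^sub>R norm b) = norm (a - b) / norm b"
    using nb by (simp add: divide_inverse ac_simps)
  also have "norm ((inverse (norm a) - inverse (norm b)) *\<^sub>R a) = \<bar>norm b - norm a\<bar> / norm b"
    using na nb by (simp add: field_simps abs_mult)
  also have "\<bar>norm b - norm a\<bar> \<le> norm (a - b)"
    by (metis norm_minus_commute norm_triangle_ineq3)
  finally show ?thesis using nb by (simp add: divide_right_mono field_simps)
qed

lemma G_eq_sgn_square:
  assumes "(u, v) \<noteq> (0, 0)"
  shows "G g0 u v = 1/2 + Im ((sgn (Complex u v))\<^sup>2) / 2"
proof -
  have pos: "u\<^sup>2 + v\<^sup>2 > 0" using assms by (simp add: sum_power2_gt_zero_iff)
  have "cmod (Complex u v) = sqrt (u\<^sup>2 + v\<^sup>2)" by (simp add: cmod_def)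
  then have "Im ((sgn (Complex u v))\<^sup>2) = 2 * u * v / (u\<^sup>2 + v\<^sup>2)"
    using pos by (simp add: sgn_div_norm power2_eq_square Complex_eq field_simps)
  then show ?thesis using assms pos unfolding G_def by (auto simp: field_simps power2_eq_square)
qed

lemma G_bounds:
  assumes "0 \<le> g0" "g0 \<le> 1"
  shows "0 \<le> G g0 u v" "G g0 u v \<le> 1"
proof -
  have num: "(u + v)\<^sup>2 \<le> 2 * (u\<^sup>2 + v\<^sup>2)"
    using sum_squares_bound[of u v] by (simp add: power2_sum)
  have "0 \<le> G g0 u v \<and> G g0 u v \<le> 1"
  proof (cases "u = 0 \<and> v = 0")
    case False
    then have "0 < u\<^sup>2 + v\<^sup>2" by (simp add: sum_power2_gt_zero_iff)
    with num False show ?thesis by (auto simp: G_def divide_le_eq)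
  qed (use assms in \<open>simp add: G_def\<close>)
  then show "0 \<le> G g0 u v" "G g0 u v \<le> 1" by simp_all
qed

lemma abs_G_diff_le:
  assumes "0 \<le> g0" "g0 \<le> 1" and uv: "(u, v) \<noteq> (0, 0)"
  shows "\<bar>G g0 u' v' - G g0 u v\<bar> \<le> 2 * cmod (Complex u' v' - Complex u v) / cmod (Complex u v)"
proof -
  define w where "w = Complex u v"
  define w' where "w' = Complex u' v'"
  have w: "w \<noteq> 0" using uv by (auto simp: w_def complex_eq_iff)
  show ?thesis
  proof (cases "w' = 0")
    case True
    with w have "2 * cmod (w' - w) / cmod w = 2" by simp
    then show ?thesis
      using G_bounds[OF assms(1,2), of u v] G_bounds[OF assms(1,2), of u' v']
      unfolding w_def w'_def by simp
  next
    case False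
    then have "(u', v') \<noteq> (0, 0)" by (auto simp: w'_def complex_eq_iff)
    then have "G g0 u' v' - G g0 u v = Im ((sgn w')\<^sup>2 - (sgn w)\<^sup>2) / 2"
      using G_eq_sgn_square[OF uv] G_eq_sgn_square by (simp add: w_def w'_def diff_divide_distrib)
    then have "\<bar>G g0 u' v' - G g0 u v\<bar> = \<bar>Im ((sgn w')\<^sup>2 - (sgn w)\<^sup>2)\<bar> / 2"
      by (simp only: abs_divide abs_numeral)
    also have "\<dots> \<le> cmod ((sgn w')\<^sup>2 - (sgn w)\<^sup>2) / 2"
      by (rule divide_right_mono[OF abs_Im_le_cmod]) simp
    also have "\<dots> = cmod (sgn w' - sgn w) * cmod (sgn w' + sgn w) / 2"
      by (simp add: power2_eq_square algebra_simps norm_mult[symmetric])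
    also have "\<dots> \<le> cmod (sgn w' - sgn w)"
    proof -
      have "cmod (sgn w' + sgn w) \<le> 2"
        using norm_triangle_ineq[of "sgn w'" "sgn w"] False w by (simp add: norm_sgn)
      then show ?thesis
        using mult_left_le[of "cmod (sgn w' + sgn w) / 2" "cmod (sgn w' - sgn w)"] by simp
    qed
    also have "\<dots> \<le> 2 * cmod (w' - w) / cmod w"
      by (rule norm_sgn_diff_le[OF w])
    finally show ?thesis by (simp add: w_def w'_def)
  qed
qed

lemma abs_G_diff_le_of_close:
  assumes g0: "0 \<le> g0" "g0 \<le> 1" and pos: "u\<^sup>2 + v\<^sup>2 > 0"
    and u': "\<bar>u' - u\<bar> < t" and v': "\<bar>v' - v\<bar> < t" and t: "t\<^sup>2 \<le> \<epsilon>\<^sup>2 * (u\<^sup>2 + v\<^sup>2)" and "0 \<le> \<epsilon>"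
  shows "\<bar>G g0 u' v' - G g0 u v\<bar> \<le> 29/10 * \<epsilon>"
proof -
  define w where "w = Complex u v"
  define d where "d = Complex u' v' - w"
  have uv: "(u, v) \<noteq> (0, 0)" using pos by auto
  have w2: "(cmod w)\<^sup>2 = u\<^sup>2 + v\<^sup>2" by (simp add: w_def cmod_def)
  have "(u' - u)\<^sup>2 < t\<^sup>2" "(v' - v)\<^sup>2 < t\<^sup>2"
    using abs_le_square_iff[of t "u' - u"] abs_le_square_iff[of t "v' - v"] u' v' abs_ge_self[of t]
    by linarith+
  then have d2: "(cmod d)\<^sup>2 < 2 * \<epsilon>\<^sup>2 * (cmod w)\<^sup>2"
    using t by (simp add: d_def w_def cmod_def w2[unfolded w_def])
  have "(2 * cmod d / cmod w)\<^sup>2 = 4 * (cmod d)\<^sup>2 / (cmod w)\<^sup>2"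
    by (simp add: power_divide power_mult_distrib)
  also have "\<dots> \<le> 8 * \<epsilon>\<^sup>2"
    using d2 pos w2 by (simp add: divide_le_eq)
  also have "\<dots> \<le> (29/10 * \<epsilon>)\<^sup>2" by (simp add: power_mult_distrib power_divide)
  finally have "2 * cmod d / cmod w \<le> 29/10 * \<epsilon>"
    by (rule power2_le_imp_le) (use \<open>0 \<le> \<epsilon>\<close> in simp)
  then show ?thesis
    using abs_G_diff_le[OF g0 uv, of u' v'] by (simp add: d_def w_def)
qed

definition pauli_entry :: "nat \<Rightarrow> bool list \<Rightarrow> nat \<Rightarrow> nat \<Rightarrow> complex" where
  "pauli_entry n x k i = (\<Prod>q<n. pauli1 (x ! q) (x ! (n + q)) (odd (k div 2 ^ q)) (odd (i div 2 ^ q)))"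

lemma pauli_eq_mat: "pauli n x = Matrix.mat (2 ^ n) (2 ^ n) (\<lambda>(k, i). pauli_entry n x k i)"
  unfolding pauli_def pauli_entry_def by simp

lemma finite_pauli_strings [simp]: "finite (pauli_strings n)"
  unfolding pauli_strings_def using finite_lists_length_eq[of "UNIV :: bool set" "2 * n"] by simp

lemma sum_lessThan_mult_2:
  fixes g :: "nat \<Rightarrow> 'a::comm_monoid_add"
  shows "(\<Sum>i<2 * m. g i) = (\<Sum>j<m. g (2 * j) + g (2 * j + 1))"
  by (induction m) (simp_all add: algebra_simps)

lemma sum_prod_bits:
  fixes f :: "nat \<Rightarrow> bool \<Rightarrow> 'a::comm_semiring_1"
  shows "(\<Sum>i<2 ^ n. \<Prod>q<n. f q (odd ((i::nat) div 2 ^ q))) = (\<Prod>q<n. f q False + f q True)"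
proof (induction n arbitrary: f)
  case 0
  then show ?case by (simp add: lessThan_Suc)
next
  case (Suc n)
  have div_Suc: "(2 * j + b) div 2 ^ Suc q = j div 2 ^ q" if "b < 2" for j b q :: nat
  proof -
    have "(2 * j + b) div 2 ^ Suc q = (2 * j + b) div 2 div 2 ^ q"
      by (simp add: div_mult2_eq mult.commute)
    with that show ?thesis by simp
  qed
  have split: "(\<Prod>q<Suc n. f q (odd ((2 * j + b) div 2 ^ q))) =
        f 0 (odd b) * (\<Prod>q<n. f (Suc q) (odd (j div 2 ^ q)))" if "b < 2" for j b :: nat
    by (subst prod.lessThan_Suc_shift) (simp only: div_Suc[OF that] power_0 div_by_1, simp)
  have "(\<Sum>i<2 ^ Suc n. \<Prod>q<Suc n. f q (odd ((i::nat) div 2 ^ q)))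
      = (\<Sum>j<2 ^ n. (f 0 False + f 0 True) * (\<Prod>q<n. f (Suc q) (odd ((j::nat) div 2 ^ q))))"
    unfolding power_Suc sum_lessThan_mult_2
    using split[of 0] split[of 1] by (simp add: algebra_simps)
  also have "\<dots> = (f 0 False + f 0 True) * (\<Prod>q<n. f (Suc q) False + f (Suc q) True)"
    by (simp add: sum_distrib_left[symmetric] Suc.IH[of "\<lambda>q. f (Suc q)"])
  also have "\<dots> = (\<Prod>q<Suc n. f q False + f q True)"
    by (subst prod.lessThan_Suc_shift) (rule refl)
  finally show ?case .
qed

lemma nat_eq_if_low_bits_eq:
  fixes i j :: nat
  assumes "i < 2 ^ n" "j < 2 ^ n" "\<forall>q<n. odd (i div 2 ^ q) = odd (j div 2 ^ q)"
  shows "i = j"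
proof (rule bit_eqI)
  fix q
  show "bit i q = bit j q"
  proof (cases "q < n")
    case True
    then show ?thesis using assms(3) by (simp add: bit_iff_odd)
  next
    case False
    then have "i < 2 ^ q" "j < 2 ^ q"
      using assms(1,2) power_increasing[of n q "2::nat"] by linarith+
    then show ?thesis by (simp add: bit_iff_odd)
  qed
qed

lemma sum_lists_length_prod:
  fixes f :: "nat \<Rightarrow> 'b::finite \<Rightarrow> 'a::comm_semiring_1"
  shows "(\<Sum>zs | length zs = n. \<Prod>q<n. f q (zs ! q)) = (\<Prod>q<n. \<Sum>z\<in>UNIV. f q z)"
proof (induction n arbitrary: f)
  case 0
  then show ?case by simp
next
  case (Suc n)
  have lists_Suc: "{zs. length zs = Suc n} = (\<lambda>(z, zs). z # zs) ` (UNIV \<times> {zs. length zs = n})"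
    by (auto simp: image_iff length_Suc_conv)
  have inj: "inj_on (\<lambda>(z, zs). z # zs) (UNIV \<times> {zs :: 'b list. length zs = n})"
    by (auto simp: inj_on_def)
  have prod_Cons: "(\<Prod>q<Suc n. f q ((z # zs) ! q)) = f 0 z * (\<Prod>q<n. f (Suc q) (zs ! q))" for z zs
    by (simp only: prod.lessThan_Suc_shift nth_Cons_0 nth_Cons_Suc)
  have "(\<Sum>zs | length zs = Suc n. \<Prod>q<Suc n. f q (zs ! q))
      = (\<Sum>(z, zs)\<in>UNIV \<times> {zs. length zs = n}. \<Prod>q<Suc n. f q ((z # zs) ! q))"
    unfolding lists_Suc by (subst sum.reindex[OF inj]) (simp add: case_prod_beta)
  also have "\<dots> = (\<Sum>z\<in>UNIV. \<Sum>zs | length zs = n. f 0 z * (\<Prod>q<n. f (Suc q) (zs ! q)))"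
    by (subst sum.cartesian_product[symmetric]) (simp only: prod_Cons case_prod_beta fst_conv snd_conv)
  also have "\<dots> = (\<Sum>z\<in>UNIV. f 0 z) * (\<Prod>q<n. \<Sum>z\<in>UNIV. f (Suc q) z)"
    by (simp add: sum_distrib_left[symmetric] sum_distrib_right Suc.IH[of "\<lambda>q. f (Suc q)"])
  also have "\<dots> = (\<Prod>q<Suc n. \<Sum>z\<in>UNIV. f q z)"
    by (subst prod.lessThan_Suc_shift) (rule refl)
  finally show ?case .
qed

lemma sum_pauli_strings_eq_sum_pairs:
  "(\<Sum>x\<in>pauli_strings n. h x) = (\<Sum>zs | length zs = n. h (map fst zs @ map snd zs))"
proof (rule sum.reindex_bij_witness[where i = "\<lambda>zs. map fst zs @ map snd zs"
      and j = "\<lambda>x. zip (take n x) (drop n x)"])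
  fix x assume "x \<in> pauli_strings n"
  then have "length x = 2 * n" by (simp add: pauli_strings_def)
  then show "zip (take n x) (drop n x) \<in> {zs. length zs = n}"
    "map fst (zip (take n x) (drop n x)) @ map snd (zip (take n x) (drop n x)) = x"
    by simp_all
qed (auto simp: pauli_strings_def zip_map_fst_snd)

lemma sum_pauli1_mult:
  "(\<Sum>z\<in>UNIV. pauli1 (fst z) (snd z) r c * pauli1 (fst z) (snd z) r' c') =
     (if r = c' \<and> c = r' then 2 else 0)"
  unfolding UNIV_Times_UNIV[symmetric] sum.cartesian_product[symmetric]
  by (cases r; cases c; cases r'; cases c') (simp_all add: UNIV_bool pauli1_def)

lemma prod_lessThan_if_const:
  "(\<Prod>q<n. if P q then c else 0) = (if \<forall>q<n. P q then c ^ n else (0 :: 'a::comm_semiring_1))"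
  by (induction n) (auto simp: less_Suc_eq mult.commute)

lemma sum_pauli_entry_mult:
  assumes "k < 2 ^ n" "i < 2 ^ n" "l < 2 ^ n" "j < 2 ^ n"
  shows "(\<Sum>x\<in>pauli_strings n. pauli_entry n x k i * pauli_entry n x l j)
       = (if k = j \<and> i = l then 2 ^ n else 0)"
proof -
  let ?f = "\<lambda>q z. pauli1 (fst z) (snd z) (odd (k div 2 ^ q)) (odd (i div 2 ^ q)) *
                  pauli1 (fst z) (snd z) (odd (l div 2 ^ q)) (odd (j div 2 ^ q))"
  have "(\<Sum>x\<in>pauli_strings n. pauli_entry n x k i * pauli_entry n x l j)
      = (\<Sum>zs | length zs = n. \<Prod>q<n. ?f q (zs ! q))"
    unfolding sum_pauli_strings_eq_sum_pairs pauli_entry_def prod.distrib[symmetric]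
    by (intro sum.cong refl prod.cong) (auto simp: nth_append)
  also have "\<dots> = (\<Prod>q<n. \<Sum>z\<in>UNIV. ?f q z)"
    by (rule sum_lists_length_prod)
  also have "\<dots> = (\<Prod>q<n. if odd (k div 2 ^ q) = odd (j div 2 ^ q) \<and> odd (i div 2 ^ q) = odd (l div 2 ^ q)
                          then 2 else 0)"
    by (simp only: sum_pauli1_mult)
  also have "\<dots> = (if k = j \<and> i = l then 2 ^ n else 0)"
    unfolding prod_lessThan_if_const using nat_eq_if_low_bits_eq[of k n j] nat_eq_if_low_bits_eq[of i n l] assms
    by auto
  finally show ?thesis .
qed

lemma cnj_pauli_entry: "cnj (pauli_entry n x k i) = pauli_entry n x i k"
proof -
  have "cnj (pauli1 a b r c) = pauli1 a b c r" for a b r c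
    by (cases a; cases b; cases r; cases c) (simp_all add: pauli1_def)
  then show ?thesis by (simp add: pauli_entry_def)
qed

lemma sum_norm_pauli_entry_row: "(\<Sum>i<2 ^ n. cmod (pauli_entry n x k i)) = 1"
proof -
  have "cmod (pauli1 a b r False) + cmod (pauli1 a b r True) = 1" for a b r
    by (cases a; cases b; cases r) (simp_all add: pauli1_def)
  then show ?thesis
    unfolding pauli_entry_def prod_norm[symmetric]
    by (subst sum_prod_bits[where f = "\<lambda>q c. cmod (pauli1 (x ! q) (x ! (n + q)) (odd (k div 2 ^ q)) c)"])
       simp
qed

lemma sum_norm_pauli_entry_col: "(\<Sum>k<2 ^ n. cmod (pauli_entry n x k i)) = 1"
proof -
  have "cmod (pauli1 a b False c) + cmod (pauli1 a b True c) = 1" for a b c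
    by (cases a; cases b; cases c) (simp_all add: pauli1_def)
  then show ?thesis
    unfolding pauli_entry_def prod_norm[symmetric]
    by (subst sum_prod_bits[where f = "\<lambda>q r. cmod (pauli1 (x ! q) (x ! (n + q)) r (odd (i div 2 ^ q)))"])
       simp
qed

lemma mtrace_mat_mult_mat:
  "mtrace (Matrix.mat N N f * Matrix.mat N N g) = (\<Sum>i<N. \<Sum>k<N. f (i, k) * g (k, i))"
  unfolding mtrace_def by (simp add: scalar_prod_def atLeast0LessThan)

definition pauli_expectation :: "nat \<Rightarrow> (nat \<Rightarrow> complex) \<Rightarrow> bool list \<Rightarrow> complex" where
  "pauli_expectation n \<psi> x = (\<Sum>i<2 ^ n. \<Sum>k<2 ^ n. (\<psi> i * cnj (\<psi> k)) * pauli_entry n x k i)"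

lemma mtrace_pure_mult_pauli:
  "mtrace (Matrix.mat (2 ^ n) (2 ^ n) (\<lambda>(i, j). \<psi> i * cnj (\<psi> j)) * pauli n x) = pauli_expectation n \<psi> x"
  unfolding pauli_eq_mat mtrace_mat_mult_mat pauli_expectation_def by simp

lemma Im_pauli_expectation: "Im (pauli_expectation n \<psi> x) = 0"
proof -
  have "cnj (pauli_expectation n \<psi> x) = (\<Sum>i<2 ^ n. \<Sum>k<2 ^ n. (cnj (\<psi> i) * \<psi> k) * pauli_entry n x i k)"
    unfolding pauli_expectation_def by (simp add: cnj_pauli_entry)
  also have "\<dots> = (\<Sum>k<2 ^ n. \<Sum>i<2 ^ n. (cnj (\<psi> i) * \<psi> k) * pauli_entry n x i k)"
    by (rule sum.swap)
  also have "\<dots> = pauli_expectation n \<psi> x"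
    unfolding pauli_expectation_def by (intro sum.cong refl) (simp add: mult_ac)
  finally show ?thesis by (metis Reals_cnj_iff complex_is_Real_iff)
qed

lemma norm_pauli_expectation_le_1:
  assumes "(\<Sum>i<2 ^ n. (cmod (\<psi> i))\<^sup>2) = 1"
  shows "cmod (pauli_expectation n \<psi> x) \<le> 1"
proof -
  let ?N = "2 ^ n :: nat" and ?P = "\<lambda>k i. cmod (pauli_entry n x k i)"
  have amgm: "a * b \<le> a\<^sup>2 / 2 + b\<^sup>2 / 2" for a b :: real
    using sum_squares_bound[of a b] by simp
  have "cmod (pauli_expectation n \<psi> x) \<le> (\<Sum>i<?N. \<Sum>k<?N. cmod (\<psi> i) * cmod (\<psi> k) * ?P k i)"
    unfolding pauli_expectation_def
    by (rule order_trans[OF norm_sum sum_mono], rule order_trans[OF norm_sum sum_mono])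
       (simp add: norm_mult)
  also have "\<dots> \<le> (\<Sum>i<?N. \<Sum>k<?N. ((cmod (\<psi> i))\<^sup>2 / 2 + (cmod (\<psi> k))\<^sup>2 / 2) * ?P k i)"
    by (intro sum_mono mult_right_mono amgm) simp
  also have "\<dots> = (\<Sum>i<?N. \<Sum>k<?N. (cmod (\<psi> i))\<^sup>2 * ?P k i) / 2
                 + (\<Sum>i<?N. \<Sum>k<?N. (cmod (\<psi> k))\<^sup>2 * ?P k i) / 2"
    by (simp add: distrib_right sum.distrib sum_divide_distrib)
  also have "(\<Sum>i<?N. \<Sum>k<?N. (cmod (\<psi> k))\<^sup>2 * ?P k i) = (\<Sum>k<?N. \<Sum>i<?N. (cmod (\<psi> k))\<^sup>2 * ?P k i)"
    by (rule sum.swap)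
  also have "(\<Sum>i<?N. \<Sum>k<?N. (cmod (\<psi> i))\<^sup>2 * ?P k i) / 2 + \<dots> / 2 = 1"
    using assms
    by (simp add: sum_distrib_left[symmetric] sum_norm_pauli_entry_row sum_norm_pauli_entry_col)
  finally show ?thesis .
qed

lemma sum_pauli_expectation_mult:
  "(\<Sum>x\<in>pauli_strings n. pauli_expectation n \<psi> x * pauli_expectation n \<phi> x) =
     2 ^ n * (\<Sum>i<2 ^ n. \<Sum>k<2 ^ n. (\<psi> i * cnj (\<psi> k)) * (\<phi> k * cnj (\<phi> i)))"
proof -
  let ?N = "2 ^ n :: nat"
  define a where "a i k = \<psi> i * cnj (\<psi> k)" for i k
  define b where "b i k = \<phi> i * cnj (\<phi> k)" for i k
  have "(\<Sum>x\<in>pauli_strings n. pauli_expectation n \<psi> x * pauli_expectation n \<phi> x) =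
      (\<Sum>i<?N. \<Sum>j<?N. \<Sum>k<?N. \<Sum>l<?N. \<Sum>x\<in>pauli_strings n.
          a i k * b j l * (pauli_entry n x k i * pauli_entry n x l j))"
    unfolding pauli_expectation_def a_def[symmetric] b_def[symmetric] sum_product
      sum.swap[of _ "pauli_strings n"]
    by (intro sum.cong refl) (simp add: mult_ac)
  also have "\<dots> = (\<Sum>i<?N. \<Sum>j<?N. \<Sum>k<?N. \<Sum>l<?N. a i k * b j l * (if k = j \<and> l = i then 2 ^ n else 0))"
    by (intro sum.cong refl) (auto simp: sum_distrib_left[symmetric] sum_pauli_entry_mult)
  also have "\<dots> = (\<Sum>i<?N. \<Sum>j<?N. a i j * b j i * 2 ^ n)"
  proof (intro sum.cong refl)
    fix i j assume "i \<in> {..<?N}" "j \<in> {..<?N}"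
    moreover have "(if k = j \<and> l = i then c else 0) = (if l = i then if k = j then c else 0 else 0)"
      for k l :: nat and c :: complex
      by simp
    ultimately show "(\<Sum>k<?N. \<Sum>l<?N. a i k * b j l * (if k = j \<and> l = i then 2 ^ n else 0))
        = a i j * b j i * 2 ^ n"
      by (simp add: if_distrib[of "(*) _"] sum.delta' cong: if_cong)
  qed
  finally show ?thesis
    by (simp add: sum_distrib_left a_def b_def mult_ac)
qed

lemma pure_stateE:
  assumes "pure_state n \<rho>"
  obtains \<psi> where "(\<Sum>i<2 ^ n. (cmod (\<psi> i))\<^sup>2) = 1"
    "\<rho> = Matrix.mat (2 ^ n) (2 ^ n) (\<lambda>(i, j). \<psi> i * cnj (\<psi> j))"
    "\<And>x. alpha n \<rho> x = Re (pauli_expectation n \<psi> x)"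
  using assms unfolding pure_state_def alpha_def by (auto simp: mtrace_pure_mult_pauli)

lemma abs_alpha_le_1:
  assumes "pure_state n \<rho>"
  shows "\<bar>alpha n \<rho> x\<bar> \<le> 1"
proof -
  obtain \<psi> where "(\<Sum>i<2 ^ n. (cmod (\<psi> i))\<^sup>2) = 1" and "\<And>x. alpha n \<rho> x = Re (pauli_expectation n \<psi> x)"
    using pure_stateE[OF assms] by metis
  then show ?thesis
    using norm_pauli_expectation_le_1 abs_Re_le_cmod order_trans by metis
qed

lemma sum_alpha_mult:
  assumes "pure_state n \<rho>" "pure_state n \<sigma>"
  shows "(\<Sum>x\<in>pauli_strings n. alpha n \<rho> x * alpha n \<sigma> x) = 2 ^ n * Re (mtrace (\<rho> * \<sigma>))"
proof -
  obtain \<psi> where \<rho>: "\<rho> = Matrix.mat (2 ^ n) (2 ^ n) (\<lambda>(i, j). \<psi> i * cnj (\<psi> j))"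
      and \<alpha>\<rho>: "\<And>x. alpha n \<rho> x = Re (pauli_expectation n \<psi> x)"
    using pure_stateE[OF assms(1)] by metis
  obtain \<phi> where \<sigma>: "\<sigma> = Matrix.mat (2 ^ n) (2 ^ n) (\<lambda>(i, j). \<phi> i * cnj (\<phi> j))"
      and \<alpha>\<sigma>: "\<And>x. alpha n \<sigma> x = Re (pauli_expectation n \<phi> x)"
    using pure_stateE[OF assms(2)] by metis
  have "(\<Sum>x\<in>pauli_strings n. alpha n \<rho> x * alpha n \<sigma> x)
      = Re (\<Sum>x\<in>pauli_strings n. pauli_expectation n \<psi> x * pauli_expectation n \<phi> x)"
    unfolding \<alpha>\<rho> \<alpha>\<sigma> Re_sum by (intro sum.cong refl) (simp add: Im_pauli_expectation)
  also have "\<dots> = 2 ^ n * Re (mtrace (\<rho> * \<sigma>))"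
    unfolding sum_pauli_expectation_mult \<rho> \<sigma> mtrace_mat_mult_mat by simp
  finally show ?thesis .
qed

lemma Re_mtrace_pure_square:
  assumes "pure_state n \<rho>"
  shows "Re (mtrace (\<rho> * \<rho>)) = 1"
proof -
  obtain \<psi> where norm: "(\<Sum>i<2 ^ n. (cmod (\<psi> i))\<^sup>2) = 1"
     and \<rho>: "\<rho> = Matrix.mat (2 ^ n) (2 ^ n) (\<lambda>(i, j). \<psi> i * cnj (\<psi> j))"
    using pure_stateE[OF assms] by metis
  have "\<psi> i * cnj (\<psi> k) * (\<psi> k * cnj (\<psi> i)) = (\<psi> i * cnj (\<psi> i)) * (\<psi> k * cnj (\<psi> k))" for i k
    by (simp add: mult_ac)
  then have "Re (mtrace (\<rho> * \<rho>)) = (\<Sum>i<2 ^ n. \<Sum>k<2 ^ n. (cmod (\<psi> i))\<^sup>2 * (cmod (\<psi> k))\<^sup>2)"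
    unfolding \<rho> mtrace_mat_mult_mat by (simp add: Re_sum complex_norm_square[symmetric])
  also have "\<dots> = 1"
    using norm by (simp add: sum_distrib_left[symmetric] sum_distrib_right[symmetric])
  finally show ?thesis .
qed

lemma sum_alpha_square:
  assumes "pure_state n \<rho>"
  shows "(\<Sum>x\<in>pauli_strings n. (alpha n \<rho> x)\<^sup>2) = 2 ^ n"
  using sum_alpha_mult[OF assms assms] Re_mtrace_pure_square[OF assms] by (simp add: power2_eq_square)

lemma p_state_nonneg: "p_state n \<rho> x \<ge> 0"
  by (simp add: p_state_def)

lemma p_mix_nonneg: "p_mix n \<rho> \<sigma> x \<ge> 0"
  by (simp add: p_mix_def p_state_nonneg)

lemma sum_p_state:
  assumes "pure_state n \<rho>"
  shows "(\<Sum>x\<in>pauli_strings n. p_state n \<rho> x) = 1"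
  unfolding p_state_def sum_divide_distrib[symmetric] sum_alpha_square[OF assms] by simp

lemma sum_p_mix:
  assumes "pure_state n \<rho>" "pure_state n \<sigma>"
  shows "(\<Sum>x\<in>pauli_strings n. p_mix n \<rho> \<sigma> x) = 1"
  unfolding p_mix_def sum_divide_distrib[symmetric] sum.distrib sum_p_state[OF assms(1)] sum_p_state[OF assms(2)]
  by simp

lemma p_mix_mult_G:
  "p_mix n \<rho> \<sigma> x * G g0 (alpha n \<rho> x) (alpha n \<sigma> x) = (alpha n \<rho> x + alpha n \<sigma> x)\<^sup>2 / (4 * 2 ^ n)"
proof (cases "alpha n \<rho> x = 0 \<and> alpha n \<sigma> x = 0")
  case True
  then show ?thesis by (simp add: p_mix_def p_state_def G_def)
next
  case False
  define S where "S = (alpha n \<rho> x)\<^sup>2 + (alpha n \<sigma> x)\<^sup>2"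
  have "S \<noteq> 0" using False by (simp add: S_def add_nonneg_eq_0_iff)
  then have "S / (2 * 2 ^ n) * ((alpha n \<rho> x + alpha n \<sigma> x)\<^sup>2 / (2 * S))
      = (alpha n \<rho> x + alpha n \<sigma> x)\<^sup>2 / (4 * 2 ^ n)"
    by (simp add: field_simps)
  moreover have "p_mix n \<rho> \<sigma> x = S / (2 * 2 ^ n)"
    by (simp add: p_mix_def p_state_def S_def add_divide_distrib)
  moreover have "G g0 (alpha n \<rho> x) (alpha n \<sigma> x) = (alpha n \<rho> x + alpha n \<sigma> x)\<^sup>2 / (2 * S)"
    using False unfolding G_def S_def by (simp only: if_False)
  ultimately show ?thesis by simp
qed

lemma fidelity_eq_sum_p_mix_G:
  assumes "pure_state n \<rho>" "pure_state n \<sigma>"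
  shows "(1 + Re (mtrace (\<rho> * \<sigma>))) / 2
       = (\<Sum>x\<in>pauli_strings n. p_mix n \<rho> \<sigma> x * G g0 (alpha n \<rho> x) (alpha n \<sigma> x))"
proof -
  have "(\<Sum>x\<in>pauli_strings n. p_mix n \<rho> \<sigma> x * G g0 (alpha n \<rho> x) (alpha n \<sigma> x))
     = ((\<Sum>x\<in>pauli_strings n. (alpha n \<rho> x)\<^sup>2) + 2 * (\<Sum>x\<in>pauli_strings n. alpha n \<rho> x * alpha n \<sigma> x)
        + (\<Sum>x\<in>pauli_strings n. (alpha n \<sigma> x)\<^sup>2)) / (4 * 2 ^ n)"
    unfolding p_mix_mult_G power2_sum
    by (simp add: sum_divide_distrib[symmetric] sum.distrib sum_distrib_left mult.assoc)
  also have "\<dots> = (1 + Re (mtrace (\<rho> * \<sigma>))) / 2"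
    unfolding sum_alpha_square[OF assms(1)] sum_alpha_square[OF assms(2)] sum_alpha_mult[OF assms]
    by (simp add: field_simps)
  finally show ?thesis by simp
qed

lemma fidelity_bounds:
  assumes "pure_state n \<rho>" "pure_state n \<sigma>"
  shows "0 \<le> (1 + Re (mtrace (\<rho> * \<sigma>))) / 2" "(1 + Re (mtrace (\<rho> * \<sigma>))) / 2 \<le> 1"
proof -
  let ?w = "\<lambda>x. p_mix n \<rho> \<sigma> x" and ?g = "\<lambda>x. G 0 (alpha n \<rho> x) (alpha n \<sigma> x)"
  have "0 \<le> (\<Sum>x\<in>pauli_strings n. ?w x * ?g x)"
    using G_bounds[of 0] by (intro sum_nonneg) (simp add: p_mix_nonneg)
  moreover have "(\<Sum>x\<in>pauli_strings n. ?w x * ?g x) \<le> (\<Sum>x\<in>pauli_strings n. ?w x)"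
    using G_bounds[of 0] by (intro sum_mono mult_left_le) (auto simp: p_mix_nonneg)
  ultimately show "0 \<le> (1 + Re (mtrace (\<rho> * \<sigma>))) / 2" "(1 + Re (mtrace (\<rho> * \<sigma>))) / 2 \<le> 1"
    unfolding fidelity_eq_sum_p_mix_G[OF assms, of 0] sum_p_mix[OF assms] by simp_all
qed

lemma stabilizer_renyi1_eq_sum:
  assumes "pure_state n \<rho>"
  shows "stabilizer_renyi1 n \<rho> = (\<Sum>x\<in>pauli_strings n.
           if p_state n \<rho> x = 0 then 0 else p_state n \<rho> x * (- log 2 ((alpha n \<rho> x)\<^sup>2)))"
proof -
  let ?p = "p_state n \<rho>" and ?A = "alpha n \<rho>"
  have summand: "- (if ?p x = 0 then 0 else ?p x * log 2 (?p x)) =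
        (if ?p x = 0 then 0 else ?p x * (- log 2 ((?A x)\<^sup>2))) + real n * ?p x" for x
  proof (cases "?p x = 0")
    case False
    then have "(?A x)\<^sup>2 > 0" by (simp add: p_state_def)
    then have "log 2 ((?A x)\<^sup>2) = log 2 (?p x) + real n"
      unfolding p_state_def by (simp add: log_divide log_nat_power)
    with False show ?thesis by (simp add: algebra_simps)
  qed simp
  have "stabilizer_renyi1 n \<rho>
      = (\<Sum>x\<in>pauli_strings n. - (if ?p x = 0 then 0 else ?p x * log 2 (?p x))) - real n"
    unfolding stabilizer_renyi1_def shannon_def by (simp add: sum_negf)
  also have "\<dots> = (\<Sum>x\<in>pauli_strings n. if ?p x = 0 then 0 else ?p x * (- log 2 ((?A x)\<^sup>2)))
                   + real n * (\<Sum>x\<in>pauli_strings n. ?p x) - real n"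
    unfolding summand by (simp add: sum.distrib sum_distrib_left)
  finally show ?thesis using sum_p_state[OF assms] by simp
qed

lemma stabilizer_renyi1_term_nonneg:
  assumes "pure_state n \<rho>"
  shows "0 \<le> (if p_state n \<rho> x = 0 then 0 else p_state n \<rho> x * (- log 2 ((alpha n \<rho> x)\<^sup>2)))"
proof -
  have "(alpha n \<rho> x)\<^sup>2 \<le> 1" using abs_alpha_le_1[OF assms] by (simp add: abs_square_le_1)
  then have "p_state n \<rho> x \<noteq> 0 \<Longrightarrow> log 2 ((alpha n \<rho> x)\<^sup>2) \<le> 0"
    by (simp add: p_state_def)
  then show ?thesis using p_state_nonneg[of n \<rho> x] by (simp add: mult_nonneg_nonpos)
qed

lemma stabilizer_renyi1_nonneg: "pure_state n \<rho> \<Longrightarrow> 0 \<le> stabilizer_renyi1 n \<rho>"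
  unfolding stabilizer_renyi1_eq_sum by (intro sum_nonneg stabilizer_renyi1_term_nonneg)

(* Markov's inequality for the nonnegative terms - p log alpha^2 of the entropy sum. *)
lemma sum_p_state_small_alpha_le:
  assumes pure: "pure_state n \<rho>" and M: "stabilizer_renyi1 n \<rho> \<le> M" and \<epsilon>: "\<epsilon> > 0"
  shows "(\<Sum>x | x \<in> pauli_strings n \<and> (alpha n \<rho> x)\<^sup>2 < 2 powr (- M / \<epsilon>). p_state n \<rho> x) \<le> \<epsilon>"
proof (rule ccontr)
  let ?p = "p_state n \<rho>"
  define h where "h x = (if ?p x = 0 then 0 else ?p x * (- log 2 ((alpha n \<rho> x)\<^sup>2)))" for x
  define B where "B = {x. x \<in> pauli_strings n \<and> (alpha n \<rho> x)\<^sup>2 < 2 powr (- M / \<epsilon>)}"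
  have finB: "finite B" by (simp add: B_def)
  have h_nonneg: "0 \<le> h x" for x
    unfolding h_def by (rule stabilizer_renyi1_term_nonneg[OF pure])
  have h_large: "?p x * (M / \<epsilon>) < h x" if "x \<in> B" "?p x \<noteq> 0" for x
  proof -
    have "(alpha n \<rho> x)\<^sup>2 > 0" using that(2) by (simp add: p_state_def)
    with that(1) have "log 2 ((alpha n \<rho> x)\<^sup>2) < - M / \<epsilon>"
      by (simp add: B_def less_powr_iff)
    then have "M / \<epsilon> < - log 2 ((alpha n \<rho> x)\<^sup>2)" by simp
    moreover have "0 < ?p x" using that(2) p_state_nonneg[of n \<rho> x] by linarith
    ultimately have "?p x * (M / \<epsilon>) < ?p x * (- log 2 ((alpha n \<rho> x)\<^sup>2))"
      by (rule mult_strict_left_mono)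
    with that(2) show ?thesis by (simp add: h_def)
  qed
  assume "\<not> ?thesis"
  then have big: "\<epsilon> < (\<Sum>x\<in>B. ?p x)" by (simp add: B_def)
  have "\<exists>x\<in>B. ?p x \<noteq> 0"
  proof (rule ccontr)
    assume "\<not> (\<exists>x\<in>B. ?p x \<noteq> 0)"
    then have "(\<Sum>x\<in>B. ?p x) = 0" by simp
    with big \<epsilon> show False by simp
  qed
  then obtain x where x: "x \<in> B" "?p x \<noteq> 0" by blast
  have "(\<Sum>x\<in>B. ?p x) * (M / \<epsilon>) < (\<Sum>x\<in>B. h x)"
  proof -
    have "?p x * (M / \<epsilon>) \<le> h x" if "x \<in> B" for x
      using h_large[OF that] by (cases "?p x = 0") (auto simp: h_def)
    then show ?thesis
      unfolding sum_distrib_right using x h_large by (blast intro: sum_strict_mono_ex1[OF finB])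
  qed
  also have "\<dots> \<le> (\<Sum>x\<in>pauli_strings n. h x)"
    by (intro sum_mono2 h_nonneg) (auto simp: B_def)
  also have "\<dots> \<le> M"
    using M unfolding stabilizer_renyi1_eq_sum[OF pure] h_def .
  finally have "(\<Sum>x\<in>B. ?p x) * (M / \<epsilon>) < M" .
  moreover have "0 \<le> M" using stabilizer_renyi1_nonneg[OF pure] M by linarith
  then have "M \<le> (\<Sum>x\<in>B. ?p x) * (M / \<epsilon>)"
    using big \<epsilon> by (simp add: field_simps mult_left_mono)
  ultimately show False by simp
qed

lemma set_pmf_measure_pauli: "set_pmf (measure_pauli n \<rho> x) \<subseteq> {-1..1}"
  unfolding measure_pauli_def by auto

lemma finite_set_pmf_measure_pauli: "finite (set_pmf (measure_pauli n \<rho> x))"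
  unfolding measure_pauli_def by simp

lemma expectation_measure_pauli:
  assumes "pure_state n \<rho>"
  shows "measure_pmf.expectation (measure_pauli n \<rho> x) (\<lambda>y. y) = alpha n \<rho> x"
proof -
  have "0 \<le> (1 + alpha n \<rho> x) / 2" "(1 + alpha n \<rho> x) / 2 \<le> 1"
    using abs_alpha_le_1[OF assms, of x] by auto
  then show ?thesis unfolding measure_pauli_def by (simp add: field_simps)
qed

lemma prob_emp_mean_measure_pauli_deviation:
  assumes "pure_state n \<rho>" "N > 0" "t \<ge> 0"
  shows "measure_pmf.prob (iid_pmf N (measure_pauli n \<rho> x)) {as. \<bar>emp_mean as - alpha n \<rho> x\<bar> \<ge> t}
         \<le> 2 * exp (- real N * t\<^sup>2 / 2)"
  using prob_iid_pmf_emp_mean_deviation[OF set_pmf_measure_pauli[of n \<rho> x], of N t] assms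
  by (simp add: expectation_measure_pauli[OF assms(1)])

lemma protocol_round_eq_map_pmf_pair:
  "protocol_round n \<rho> \<sigma> g0 N2 x =
     map_pmf (\<lambda>(as, bs). G g0 (emp_mean as) (emp_mean bs))
       (pair_pmf (iid_pmf N2 (measure_pauli n \<rho> x)) (iid_pmf N2 (measure_pauli n \<sigma> x)))"
  unfolding protocol_round_def map_pmf_def pair_pmf_def by (simp add: bind_assoc_pmf bind_return_pmf)

lemma finite_set_pmf_protocol_round: "finite (set_pmf (protocol_round n \<rho> \<sigma> g0 N2 x))"
  unfolding protocol_round_eq_map_pmf_pair by (simp add: finite_set_pmf_iid_pmf finite_set_pmf_measure_pauli)

lemma set_pmf_protocol_round:
  "0 \<le> g0 \<Longrightarrow> g0 \<le> 1 \<Longrightarrow> set_pmf (protocol_round n \<rho> \<sigma> g0 N2 x) \<subseteq> {0..1}"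
  unfolding protocol_round_eq_map_pmf_pair using G_bounds by auto

lemma set_pmf_bind_protocol_round:
  "0 \<le> g0 \<Longrightarrow> g0 \<le> 1 \<Longrightarrow> set_pmf (bind_pmf pt (protocol_round n \<rho> \<sigma> g0 N2)) \<subseteq> {0..1}"
  unfolding set_bind_pmf using set_pmf_protocol_round by blast

lemma abs_expectation_protocol_round_minus_G_le_prob:
  assumes g0: "0 \<le> g0" "g0 \<le> 1" and "0 \<le> \<epsilon>"
    and pos: "0 < (alpha n \<rho> x)\<^sup>2 + (alpha n \<sigma> x)\<^sup>2"
    and t: "t\<^sup>2 \<le> \<epsilon>\<^sup>2 * ((alpha n \<rho> x)\<^sup>2 + (alpha n \<sigma> x)\<^sup>2)"
  shows "\<bar>measure_pmf.expectation (protocol_round n \<rho> \<sigma> g0 N2 x) (\<lambda>y. y)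
            - G g0 (alpha n \<rho> x) (alpha n \<sigma> x)\<bar>
         \<le> 29/10 * \<epsilon> + measure_pmf.prob (iid_pmf N2 (measure_pauli n \<rho> x)) {as. \<bar>emp_mean as - alpha n \<rho> x\<bar> \<ge> t}
            + measure_pmf.prob (iid_pmf N2 (measure_pauli n \<sigma> x)) {bs. \<bar>emp_mean bs - alpha n \<sigma> x\<bar> \<ge> t}"
proof -
  let ?u = "alpha n \<rho> x" and ?v = "alpha n \<sigma> x"
  define P1 where "P1 = iid_pmf N2 (measure_pauli n \<rho> x)"
  define P2 where "P2 = iid_pmf N2 (measure_pauli n \<sigma> x)"
  define Q where "Q = pair_pmf P1 P2"
  define h where "h = (\<lambda>(as, bs). G g0 (emp_mean as) (emp_mean bs))"
  define E1 where "E1 = {as. \<bar>emp_mean as - ?u\<bar> \<ge> t}"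
  define E2 where "E2 = {bs. \<bar>emp_mean bs - ?v\<bar> \<ge> t}"
  have int: "integrable (measure_pmf Q) f" for f :: "_ \<Rightarrow> real"
    unfolding Q_def P1_def P2_def
    by (intro integrable_measure_pmf_finite) (simp add: finite_set_pmf_iid_pmf finite_set_pmf_measure_pauli)
  have "\<bar>measure_pmf.expectation (protocol_round n \<rho> \<sigma> g0 N2 x) (\<lambda>y. y) - G g0 ?u ?v\<bar>
      = \<bar>measure_pmf.expectation Q (\<lambda>z. h z - G g0 ?u ?v)\<bar>"
    using int unfolding protocol_round_eq_map_pmf_pair Q_def P1_def P2_def h_def
    by (simp add: Bochner_Integration.integral_diff measure_pmf.prob_space)
  also have "\<dots> \<le> measure_pmf.expectation Q (\<lambda>z. \<bar>h z - G g0 ?u ?v\<bar>)"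
    by (rule integral_abs_bound)
  also have "\<dots> \<le> measure_pmf.expectation Q (\<lambda>z. 29/10 * \<epsilon> + indicator E1 (fst z) + indicator E2 (snd z))"
  proof (rule integral_mono[OF int int])
    fix z :: "real list \<times> real list"
    obtain as bs where z: "z = (as, bs)" by (cases z)
    show "\<bar>h z - G g0 ?u ?v\<bar> \<le> 29/10 * \<epsilon> + indicator E1 (fst z) + indicator E2 (snd z)"
    proof (cases "as \<in> E1 \<or> bs \<in> E2")
      case True
      have "\<bar>h z - G g0 ?u ?v\<bar> \<le> 1"
        using G_bounds[OF g0, of "emp_mean as" "emp_mean bs"] G_bounds[OF g0, of ?u ?v]
        by (auto simp: z h_def)
      with True z \<open>0 \<le> \<epsilon>\<close> show ?thesis by (auto simp: indicator_def)
    next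
      case False
      then have "\<bar>emp_mean as - ?u\<bar> < t" "\<bar>emp_mean bs - ?v\<bar> < t"
        by (auto simp: E1_def E2_def)
      from abs_G_diff_le_of_close[OF g0 pos this t \<open>0 \<le> \<epsilon>\<close>] False show ?thesis
        by (simp add: z h_def)
    qed
  qed
  also have "\<dots> = 29/10 * \<epsilon> + measure_pmf.prob P1 E1 + measure_pmf.prob P2 E2"
    using int unfolding Q_def by (simp add: Bochner_Integration.integral_add measure_pmf.prob_space)
  finally show ?thesis by (simp add: P1_def P2_def E1_def E2_def)
qed

lemma abs_expectation_protocol_round_minus_G_le:
  assumes pure: "pure_state n \<rho>" "pure_state n \<sigma>" and g0: "0 \<le> g0" "g0 \<le> 1"
    and N2: "N2 > 0" and "0 \<le> \<epsilon>" "0 \<le> t"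
    and pos: "0 < (alpha n \<rho> x)\<^sup>2 + (alpha n \<sigma> x)\<^sup>2"
    and t: "t\<^sup>2 \<le> \<epsilon>\<^sup>2 * ((alpha n \<rho> x)\<^sup>2 + (alpha n \<sigma> x)\<^sup>2)"
  shows "\<bar>measure_pmf.expectation (protocol_round n \<rho> \<sigma> g0 N2 x) (\<lambda>y. y)
            - G g0 (alpha n \<rho> x) (alpha n \<sigma> x)\<bar> \<le> 29/10 * \<epsilon> + 4 * exp (- real N2 * t\<^sup>2 / 2)"
  using abs_expectation_protocol_round_minus_G_le_prob[OF g0 \<open>0 \<le> \<epsilon>\<close> pos t, of N2]
    prob_emp_mean_measure_pauli_deviation[OF pure(1) N2 \<open>0 \<le> t\<close>, of x]
    prob_emp_mean_measure_pauli_deviation[OF pure(2) N2 \<open>0 \<le> t\<close>, of x]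
  by linarith

lemma symmetric_estimator_eq_iid_pmf:
  "symmetric_estimator n \<rho> \<sigma> g0 pt N1 N2 =
     map_pmf (\<lambda>gs. sum_list gs / real N1) (iid_pmf N1 (bind_pmf pt (protocol_round n \<rho> \<sigma> g0 N2)))"
  unfolding symmetric_estimator_def bind_iid_pmf_seq_pmf[symmetric] map_pmf_def by (simp add: bind_assoc_pmf)

lemma set_pmf_symmetric_estimator:
  assumes "0 \<le> g0" "g0 \<le> 1"
  shows "set_pmf (symmetric_estimator n \<rho> \<sigma> g0 pt N1 N2) \<subseteq> {0..1}"
proof
  fix y assume "y \<in> set_pmf (symmetric_estimator n \<rho> \<sigma> g0 pt N1 N2)"
  then obtain gs where gs: "gs \<in> set_pmf (iid_pmf N1 (bind_pmf pt (protocol_round n \<rho> \<sigma> g0 N2)))"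
    and y: "y = sum_list gs / real N1"
    unfolding symmetric_estimator_eq_iid_pmf by auto
  have "length gs = N1" "set gs \<subseteq> {0..1}"
    using set_pmf_iid_pmfD[OF gs] set_pmf_bind_protocol_round[OF assms, of pt n \<rho> \<sigma> N2] by auto
  moreover have "set gs \<subseteq> {0..1} \<Longrightarrow> 0 \<le> sum_list gs \<and> sum_list gs \<le> real (length gs)"
    by (induction gs) auto
  ultimately have "0 \<le> sum_list gs" "sum_list gs \<le> real N1" by auto
  then show "y \<in> {0..1}" unfolding y by (auto simp: divide_le_eq)
qed

lemma prob_symmetric_estimator_close_eq_1:
  assumes pure: "pure_state n \<rho>" "pure_state n \<sigma>" and g0: "0 \<le> g0" "g0 \<le> 1" and "1 \<le> b"
  shows "measure_pmf.prob (symmetric_estimator n \<rho> \<sigma> g0 pt N1 N2)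
           {y. \<bar>y - (1 + Re (mtrace (\<rho> * \<sigma>))) / 2\<bar> \<le> b} = 1"
proof -
  define F where "F = (1 + Re (mtrace (\<rho> * \<sigma>))) / 2"
  have F: "0 \<le> F" "F \<le> 1" unfolding F_def by (rule fidelity_bounds[OF pure])+
  have "\<bar>y - F\<bar> \<le> b" if "y \<in> set_pmf (symmetric_estimator n \<rho> \<sigma> g0 pt N1 N2)" for y
  proof -
    have "y \<in> {0..1}" by (rule subsetD[OF set_pmf_symmetric_estimator[OF g0] that])
    with F have "\<bar>y - F\<bar> \<le> 1" by (simp add: abs_le_iff)
    with \<open>1 \<le> b\<close> show ?thesis by linarith
  qed
  then show ?thesis
    by (simp add: F_def[symmetric] measure_pmf.prob_eq_1 AE_measure_pmf_iff)
qed

lemma abs_sum_mult_diff_le: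
  fixes S B :: "'a set" and p q f g :: "'a \<Rightarrow> real"
  assumes S: "finite S" "B \<subseteq> S" and p: "\<And>x. x \<in> S \<Longrightarrow> 0 \<le> p x" "sum p S = 1"
    and f: "\<And>x. x \<in> S \<Longrightarrow> \<bar>f x\<bar> \<le> 1" and fg: "\<And>x. x \<in> S \<Longrightarrow> \<bar>f x - g x\<bar> \<le> 1"
    and good: "\<And>x. x \<in> S - B \<Longrightarrow> \<bar>f x - g x\<bar> \<le> c" and "0 \<le> c"
  shows "\<bar>(\<Sum>x\<in>S. q x * f x) - (\<Sum>x\<in>S. p x * g x)\<bar> \<le> (\<Sum>x\<in>S. \<bar>p x - q x\<bar>) + sum p B + c"
proof -
  have "\<bar>(\<Sum>x\<in>S. q x * f x) - (\<Sum>x\<in>S. p x * g x)\<bar>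
      = \<bar>(\<Sum>x\<in>S. (q x - p x) * f x) + (\<Sum>x\<in>S. p x * (f x - g x))\<bar>"
    by (simp add: sum_subtractf[symmetric] sum.distrib[symmetric] algebra_simps)
  also have "\<dots> \<le> (\<Sum>x\<in>S. \<bar>p x - q x\<bar>) + (\<Sum>x\<in>S. p x * \<bar>f x - g x\<bar>)"
  proof (rule order_trans[OF abs_triangle_ineq add_mono])
    have "\<bar>q x - p x\<bar> * \<bar>f x\<bar> \<le> \<bar>p x - q x\<bar>" if "x \<in> S" for x
      using f[OF that] mult_left_le[of "\<bar>f x\<bar>" "\<bar>q x - p x\<bar>"] by (simp add: abs_minus_commute)
    then show "\<bar>\<Sum>x\<in>S. (q x - p x) * f x\<bar> \<le> (\<Sum>x\<in>S. \<bar>p x - q x\<bar>)"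
      by (intro order_trans[OF sum_abs sum_mono]) (simp add: abs_mult)
    show "\<bar>\<Sum>x\<in>S. p x * (f x - g x)\<bar> \<le> (\<Sum>x\<in>S. p x * \<bar>f x - g x\<bar>)"
      using p(1) by (intro order_trans[OF sum_abs sum_mono]) (simp add: abs_mult)
  qed
  also have "(\<Sum>x\<in>S. p x * \<bar>f x - g x\<bar>) = (\<Sum>x\<in>B. p x * \<bar>f x - g x\<bar>) + (\<Sum>x\<in>S - B. p x * \<bar>f x - g x\<bar>)"
    using S by (simp add: sum.subset_diff add.commute)
  also have "(\<Sum>x\<in>B. p x * \<bar>f x - g x\<bar>) \<le> sum p B"
    using S p fg by (intro sum_mono mult_left_le) auto
  also have "(\<Sum>x\<in>S - B. p x * \<bar>f x - g x\<bar>) \<le> (\<Sum>x\<in>S. p x * c)"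
    using S p good \<open>0 \<le> c\<close>
    by (intro order_trans[OF sum_mono sum_mono2[of S "S - B"]] mult_left_mono) auto
  also have "(\<Sum>x\<in>S. p x * c) = c"
    using p(2) by (simp add: sum_distrib_right[symmetric])
  finally show ?thesis by simp
qed

lemma sum_p_mix_small_alpha_le:
  assumes pure: "pure_state n \<rho>" "pure_state n \<sigma>"
    and M: "stabilizer_renyi1 n \<rho> \<le> M" "stabilizer_renyi1 n \<sigma> \<le> M" and \<epsilon>: "\<epsilon> > 0"
  shows "(\<Sum>x | x \<in> pauli_strings n \<and> (alpha n \<rho> x)\<^sup>2 < 2 powr (- M / \<epsilon>)
                 \<and> (alpha n \<sigma> x)\<^sup>2 < 2 powr (- M / \<epsilon>). p_mix n \<rho> \<sigma> x) \<le> \<epsilon>"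
proof -
  let ?T = "2 powr (- M / \<epsilon>)"
  define B where "B = {x. x \<in> pauli_strings n \<and> (alpha n \<rho> x)\<^sup>2 < ?T \<and> (alpha n \<sigma> x)\<^sup>2 < ?T}"
  have "(\<Sum>x\<in>B. p_state n \<rho> x) \<le> \<epsilon>"
    by (rule order_trans[OF sum_mono2 sum_p_state_small_alpha_le[OF pure(1) M(1) \<epsilon>]])
       (auto simp: B_def p_state_nonneg)
  moreover have "(\<Sum>x\<in>B. p_state n \<sigma> x) \<le> \<epsilon>"
    by (rule order_trans[OF sum_mono2 sum_p_state_small_alpha_le[OF pure(2) M(2) \<epsilon>]])
       (auto simp: B_def p_state_nonneg)
  moreover have "sum (p_mix n \<rho> \<sigma>) B = (\<Sum>x\<in>B. p_state n \<rho> x) / 2 + (\<Sum>x\<in>B. p_state n \<sigma> x) / 2"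
    by (simp add: p_mix_def sum_divide_distrib[symmetric] sum.distrib add_divide_distrib)
  ultimately have "sum (p_mix n \<rho> \<sigma>) B \<le> \<epsilon>" by linarith
  then show ?thesis by (simp add: B_def)
qed

lemma tv_dist_nonneg: "0 \<le> tv_dist X p q"
  unfolding tv_dist_def by (simp add: sum_nonneg)

lemma abs_expectation_round_minus_fidelity_le:
  assumes pure: "pure_state n \<rho>" "pure_state n \<sigma>" and g0: "0 \<le> g0" "g0 \<le> 1"
    and pt: "set_pmf pt \<subseteq> pauli_strings n"
    and M: "stabilizer_renyi1 n \<rho> \<le> M" "stabilizer_renyi1 n \<sigma> \<le> M"
    and \<epsilon>: "\<epsilon> > 0" and N2: "N2 > 0" and t: "0 \<le> t" "t \<le> \<epsilon> * 2 powr (- M / \<epsilon>)"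
  shows "\<bar>measure_pmf.expectation (bind_pmf pt (protocol_round n \<rho> \<sigma> g0 N2)) (\<lambda>y. y)
            - (1 + Re (mtrace (\<rho> * \<sigma>))) / 2\<bar>
         \<le> 2 * tv_dist (pauli_strings n) (p_mix n \<rho> \<sigma>) (pmf pt) + 39/10 * \<epsilon>
            + 4 * exp (- real N2 * t\<^sup>2 / 2)"
proof -
  define T where "T = 2 powr (- M / \<epsilon>)"
  define B where "B = {x. x \<in> pauli_strings n \<and> (alpha n \<rho> x)\<^sup>2 < T \<and> (alpha n \<sigma> x)\<^sup>2 < T}"
  define r where "r x = measure_pmf.expectation (protocol_round n \<rho> \<sigma> g0 N2 x) (\<lambda>y. y)" for x
  define g where "g x = G g0 (alpha n \<rho> x) (alpha n \<sigma> x)" for x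
  have "0 \<le> M" using stabilizer_renyi1_nonneg[OF pure(1)] M(1) by linarith
  then have "- M / \<epsilon> \<le> 0" using \<epsilon> by (simp add: divide_nonneg_pos)
  then have T: "0 < T" "T \<le> 1"
    using powr_mono[of "- M / \<epsilon>" 0 2] by (simp_all add: T_def)
  have r: "r x \<in> {0..1}" for x
    unfolding r_def using set_pmf_protocol_round[OF g0] by (rule expectation_id_mem_01)
  (* Outside B we have alpha_rho^2 + alpha_sigma^2 >= T >= T^2, so the absolute accuracy t <= eps T
     of the inner estimates is a relative accuracy eps. *)
  have good: "\<bar>r x - g x\<bar> \<le> 29/10 * \<epsilon> + 4 * exp (- real N2 * t\<^sup>2 / 2)" if "x \<in> pauli_strings n - B" for x
  proof -
    have big: "T \<le> (alpha n \<rho> x)\<^sup>2 + (alpha n \<sigma> x)\<^sup>2"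
      using that by (auto simp: B_def add_increasing add_increasing2)
    have "t\<^sup>2 \<le> (\<epsilon> * T)\<^sup>2" using t by (simp add: T_def power_mono)
    also have "\<dots> \<le> \<epsilon>\<^sup>2 * T"
      using T mult_left_mono[of "T * T" T "\<epsilon> * \<epsilon>"] by (simp add: power2_eq_square mult_ac)
    also have "\<dots> \<le> \<epsilon>\<^sup>2 * ((alpha n \<rho> x)\<^sup>2 + (alpha n \<sigma> x)\<^sup>2)" using big by (simp add: mult_left_mono)
    finally show ?thesis
      unfolding r_def g_def using \<epsilon> T big
      by (intro abs_expectation_protocol_round_minus_G_le[OF pure g0 N2 _ t(1)]) auto
  qed
  have "measure_pmf.expectation (bind_pmf pt (protocol_round n \<rho> \<sigma> g0 N2)) (\<lambda>y. y)
      = (\<Sum>x\<in>pauli_strings n. pmf pt x * r x)"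
    unfolding r_def using pt by (subst pmf_expectation_bind) (auto simp: finite_set_pmf_protocol_round)
  moreover have "(1 + Re (mtrace (\<rho> * \<sigma>))) / 2 = (\<Sum>x\<in>pauli_strings n. p_mix n \<rho> \<sigma> x * g x)"
    unfolding g_def by (rule fidelity_eq_sum_p_mix_G[OF pure])
  moreover have "\<bar>(\<Sum>x\<in>pauli_strings n. pmf pt x * r x) - (\<Sum>x\<in>pauli_strings n. p_mix n \<rho> \<sigma> x * g x)\<bar>
      \<le> (\<Sum>x\<in>pauli_strings n. \<bar>p_mix n \<rho> \<sigma> x - pmf pt x\<bar>) + sum (p_mix n \<rho> \<sigma>) B
         + (29/10 * \<epsilon> + 4 * exp (- real N2 * t\<^sup>2 / 2))"
  proof (rule abs_sum_mult_diff_le)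
    show "\<bar>r x\<bar> \<le> 1" "\<bar>r x - g x\<bar> \<le> 1" for x
      using r[of x] G_bounds[OF g0, of "alpha n \<rho> x" "alpha n \<sigma> x"] by (auto simp: g_def)
  qed (use good pure \<epsilon> in \<open>auto simp: B_def p_mix_nonneg sum_p_mix\<close>)
  moreover have "sum (p_mix n \<rho> \<sigma>) B \<le> \<epsilon>"
    unfolding B_def T_def by (rule sum_p_mix_small_alpha_le[OF pure M \<epsilon>])
  ultimately show ?thesis
    by (simp add: tv_dist_def)
qed

lemma exp_neg_le_inverse_of_log2_le:
  fixes A z :: real
  assumes "1 < z" "log 2 z \<le> A"
  shows "exp (- A) \<le> 1 / z"
proof -
  have "ln z \<le> log 2 z"
    using assms(1) ln_2_less_1 by (simp add: log_def le_divide_eq)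
  then have "exp (- A) \<le> exp (- ln z)" using assms(2) by simp
  also have "\<dots> = 1 / z" using assms(1) by (simp add: exp_minus inverse_eq_divide)
  finally show ?thesis .
qed

lemma sample_sizes_sufficient:
  assumes \<epsilon>: "0 < \<epsilon>" "\<epsilon> \<le> 1/5" and \<delta>: "0 < \<delta>" "\<delta> < 1" and "0 < t"
    and N1: "real N1 \<ge> 1 / (2 * \<epsilon>\<^sup>2) * log 2 (8 / \<delta>)"
    and N2: "real N2 \<ge> 2 / t\<^sup>2 * log 2 (8 * real N1 / \<delta>)"
  shows "N1 > 0" "N2 > 0" "2 * exp (- 2 * real N1 * \<epsilon>\<^sup>2) \<le> \<delta>"
    "4 * exp (- real N2 * t\<^sup>2 / 2) \<le> \<epsilon> / 10"
proof -
  have "log 2 8 \<le> log 2 (8 / \<delta>)" using \<delta> by (simp add: le_divide_eq)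
  moreover have "log 2 (8::real) = 3"
    using log_powr_cancel[of 2 3] by simp
  ultimately have L1: "3 \<le> log 2 (8 / \<delta>)" by simp
  have N1': "log 2 (8 / \<delta>) \<le> 2 * real N1 * \<epsilon>\<^sup>2"
    using N1 \<epsilon> by (simp add: field_simps)
  with L1 \<epsilon> show N1_pos: "N1 > 0" by (cases "N1 = 0") auto
  have "exp (- (2 * real N1 * \<epsilon>\<^sup>2)) \<le> 1 / (8 / \<delta>)"
    using \<delta> N1' by (intro exp_neg_le_inverse_of_log2_le) (simp_all add: less_divide_eq)
  with \<delta> show "2 * exp (- 2 * real N1 * \<epsilon>\<^sup>2) \<le> \<delta>" by simp
  have z: "1 < 8 * real N1 / \<delta>"
    using \<delta> N1_pos by (simp add: less_divide_eq)
  have N2': "log 2 (8 * real N1 / \<delta>) \<le> real N2 * t\<^sup>2 / 2"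
    using N2 \<open>0 < t\<close> by (simp add: field_simps)
  moreover have "0 < log 2 (8 * real N1 / \<delta>)" using z by simp
  ultimately show "N2 > 0" by (cases "N2 = 0") auto
  have "4 * exp (- (real N2 * t\<^sup>2 / 2)) \<le> 4 * (1 / (8 * real N1 / \<delta>))"
    using exp_neg_le_inverse_of_log2_le[OF z N2'] by simp
  also have "\<dots> \<le> 1 / (2 * real N1)"
    using \<delta> N1_pos by (simp add: field_simps)
  also have "\<dots> \<le> \<epsilon>\<^sup>2 / 3"
    using L1 N1' N1_pos \<epsilon> by (simp add: field_simps)
  also have "\<dots> \<le> \<epsilon> / 10"
    using \<epsilon> by (simp add: power2_eq_square mult_right_mono)
  finally show "4 * exp (- real N2 * t\<^sup>2 / 2) \<le> \<epsilon> / 10" by simp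
qed

lemma prob_symmetric_estimator_close:
  assumes pure: "pure_state n \<rho>" "pure_state n \<sigma>" and g0: "0 \<le> g0" "g0 \<le> 1"
    and pt: "set_pmf pt \<subseteq> pauli_strings n" and tv: "tv_dist (pauli_strings n) (p_mix n \<rho> \<sigma>) (pmf pt) < \<Delta>"
    and M: "stabilizer_renyi1 n \<rho> \<le> M" "stabilizer_renyi1 n \<sigma> \<le> M"
    and \<epsilon>: "0 < \<epsilon>" "\<epsilon> \<le> 1/5" and \<delta>: "0 < \<delta>" "\<delta> < 1"
    and t: "0 < t" "t \<le> \<epsilon> * 2 powr (- M / \<epsilon>)"
    and N1: "real N1 \<ge> 1 / (2 * \<epsilon>\<^sup>2) * log 2 (8 / \<delta>)"
    and N2: "real N2 \<ge> 2 / t\<^sup>2 * log 2 (8 * real N1 / \<delta>)"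
  shows "measure_pmf.prob (symmetric_estimator n \<rho> \<sigma> g0 pt N1 N2)
           {y. \<bar>y - (1 + Re (mtrace (\<rho> * \<sigma>))) / 2\<bar> \<le> 5 * \<epsilon> + 2 * \<Delta>} \<ge> 1 - \<delta>"
proof -
  let ?D = "bind_pmf pt (protocol_round n \<rho> \<sigma> g0 N2)" and ?F = "(1 + Re (mtrace (\<rho> * \<sigma>))) / 2"
  note sizes = sample_sizes_sufficient[OF \<epsilon> \<delta> t(1) N1 N2]
  have "\<bar>measure_pmf.expectation ?D (\<lambda>y. y) - ?F\<bar>
      \<le> 2 * tv_dist (pauli_strings n) (p_mix n \<rho> \<sigma>) (pmf pt) + 39/10 * \<epsilon> + 4 * exp (- real N2 * t\<^sup>2 / 2)"
    using t by (intro abs_expectation_round_minus_fidelity_le[OF pure g0 pt M \<epsilon>(1) sizes(2)]) simp_all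
  then have bias: "\<bar>measure_pmf.expectation ?D (\<lambda>y. y) - ?F\<bar> \<le> 2 * \<Delta> + 4 * \<epsilon>"
    using tv sizes(4) by linarith
  from prob_iid_pmf_mean_close[OF set_pmf_bind_protocol_round[OF g0] sizes(1) less_imp_le[OF \<epsilon>(1)] bias]
  have "1 - 2 * exp (- 2 * real N1 * \<epsilon>\<^sup>2)
      \<le> measure_pmf.prob (symmetric_estimator n \<rho> \<sigma> g0 pt N1 N2) {y. \<bar>y - ?F\<bar> \<le> 2 * \<Delta> + 4 * \<epsilon> + \<epsilon>}"
    by (simp add: symmetric_estimator_eq_iid_pmf)
  also have "2 * \<Delta> + 4 * \<epsilon> + \<epsilon> = 5 * \<epsilon> + 2 * \<Delta>" by simp
  finally show ?thesis using sizes(3) by linarith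
qed

theorem corollary6:
  fixes n N1 N2 :: nat and \<rho> \<sigma> :: "complex mat" and \<epsilon> \<delta> \<Delta> g0 :: real
    and pt :: "bool list pmf"
  assumes "pure_state n \<rho>" and "pure_state n \<sigma>"
    and "\<epsilon> > 0" and "\<delta> > 0"
    and "0 \<le> g0" and "g0 \<le> 1"
    and "set_pmf pt \<subseteq> pauli_strings n"
    and "tv_dist (pauli_strings n) (p_mix n \<rho> \<sigma>) (pmf pt) < \<Delta>"
    and "M1 = max (stabilizer_renyi1 n \<rho>) (stabilizer_renyi1 n \<sigma>)"
    and "F = (1 + Re (mtrace (\<rho> * \<sigma>))) / 2"
    and "real N1 \<ge> 1 / (2 * \<epsilon>\<^sup>2) * log 2 (8 / \<delta>)"
    and "real N2 \<ge> 2 / min (\<epsilon> ^ 4) (\<epsilon>\<^sup>2 * 2 powr (- 2 * M1 / \<epsilon>)) * log 2 (8 * real N1 / \<delta>)"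
  shows "measure_pmf.prob (symmetric_estimator n \<rho> \<sigma> g0 pt N1 N2)
           {y. \<bar>y - F\<bar> \<le> 5 * \<epsilon> + 2 * \<Delta>} \<ge> 1 - \<delta>"
proof -
  note pure = assms(1,2) and g0 = assms(5,6)
  consider "1 \<le> \<delta>" | "1/5 < \<epsilon>" | "\<delta> < 1" "\<epsilon> \<le> 1/5" by linarith
  then show ?thesis
  proof cases
    case 1
    then show ?thesis by (smt (verit) measure_nonneg)
  next
    case 2
    then have "1 \<le> 5 * \<epsilon> + 2 * \<Delta>"
      using tv_dist_nonneg[of "pauli_strings n" "p_mix n \<rho> \<sigma>" "pmf pt"] assms(8) by linarith
    with assms(4) show ?thesis
      unfolding assms(10) by (simp add: prob_symmetric_estimator_close_eq_1[OF pure g0])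
  next
    case 3
    define t where "t = sqrt (min (\<epsilon> ^ 4) (\<epsilon>\<^sup>2 * 2 powr (- 2 * M1 / \<epsilon>)))"
    have t2: "t\<^sup>2 = min (\<epsilon> ^ 4) (\<epsilon>\<^sup>2 * 2 powr (- 2 * M1 / \<epsilon>))" and "0 < t"
      using assms(3) by (simp_all add: t_def)
    have "t \<le> sqrt ((\<epsilon> * 2 powr (- M1 / \<epsilon>))\<^sup>2)"
      unfolding t_def by (rule real_sqrt_le_mono) (simp add: power_mult_distrib powr_power)
    then have "t \<le> \<epsilon> * 2 powr (- M1 / \<epsilon>)" using assms(3) by simp
    moreover have "real N2 \<ge> 2 / t\<^sup>2 * log 2 (8 * real N1 / \<delta>)" using assms(12) t2 by simp
    moreover have "stabilizer_renyi1 n \<rho> \<le> M1" "stabilizer_renyi1 n \<sigma> \<le> M1" using assms(9) by simp_all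
    ultimately show ?thesis
      unfolding assms(10)
      by (intro prob_symmetric_estimator_close[OF pure g0 assms(7,8) _ _ assms(3) 3(2) assms(4) 3(1) \<open>0 < t\<close>
            _ assms(11)])
  qed
qed

end
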